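(* If $G$ and $H$ are 1-homogeneous graphs, then \[\chi_{vec}(G \times H) = \min\{\chi_{vec}(G), \chi_{vec}(H)\}.\]
   Context: Graphs are finite, simple and undirected. A graph $G$ is 1-homogeneous if (1) for every $k$, the number of closed walks of length $k$ starting at a vertex $u$ does not depend on $u$, and (2) for every $k$, the number of walks of length $k$ from $u$ to $v$, for adjacent $u,v$, does not depend on the edge $uv$. The categorical product $G\times H$ has vertex set $V(G)\times V(H)$, with $(u_1,v_1)\sim(u_2,v_2)$ iff $u_1\sim u_2$ and $v_1\sim v_2$. For a real $k>1$, a vector $k$-coloring of $G$ is a map $\varphi$ from $V(G)$ to the unit sphere of some $\mathbb{R}^d$ with $\varphi(u)^T\varphi(v)\le -\frac{1}{k-1}$ whenever $u\sim v$; the vector chromatic number $\chi_{vec}(G)$ is the smallest such $k$ (equal to $1$ for graphs with no edges). *)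

theory Defs
  imports Complex_Main
begin

definition simple_graph :: "'a set \<Rightarrow> ('a \<Rightarrow> 'a \<Rightarrow> bool) \<Rightarrow> bool" where
  "simple_graph V E \<longleftrightarrow> finite V \<and> (\<forall>u v. E u v \<longrightarrow> u \<in> V \<and> v \<in> V)
     \<and> (\<forall>u v. E u v \<longrightarrow> E v u) \<and> (\<forall>u. \<not> E u u)"

fun walks :: "'a set \<Rightarrow> ('a \<Rightarrow> 'a \<Rightarrow> bool) \<Rightarrow> nat \<Rightarrow> 'a \<Rightarrow> 'a \<Rightarrow> nat" where
  "walks V E 0 u v = (if u = v then 1 else 0)"
| "walks V E (Suc k) u v = (\<Sum>w\<in>{w\<in>V. E u w}. walks V E k w v)"

definition one_homogeneous :: "'a set \<Rightarrow> ('a \<Rightarrow> 'a \<Rightarrow> bool) \<Rightarrow> bool" where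
  "one_homogeneous V E \<longleftrightarrow>
     (\<forall>k. \<forall>u\<in>V. \<forall>u'\<in>V. walks V E k u u = walks V E k u' u') \<and>
     (\<forall>k u v u' v'. E u v \<longrightarrow> E u' v' \<longrightarrow> walks V E k u v = walks V E k u' v')"

definition cat_prod_verts :: "'a set \<Rightarrow> 'b set \<Rightarrow> ('a \<times> 'b) set" where
  "cat_prod_verts V W = V \<times> W"

definition cat_prod_edges ::
  "('a \<Rightarrow> 'a \<Rightarrow> bool) \<Rightarrow> ('b \<Rightarrow> 'b \<Rightarrow> bool) \<Rightarrow> ('a \<times> 'b) \<Rightarrow> ('a \<times> 'b) \<Rightarrow> bool" where
  "cat_prod_edges E F p q \<longleftrightarrow> E (fst p) (fst q) \<and> F (snd p) (snd q)"

text \<open>Vectors in R^d are represented as functions nat \<Rightarrow> real, using coordinates 0..d-1.\<close>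

definition vec_inner :: "nat \<Rightarrow> (nat \<Rightarrow> real) \<Rightarrow> (nat \<Rightarrow> real) \<Rightarrow> real" where
  "vec_inner d x y = (\<Sum>i<d. x i * y i)"

definition vector_coloring ::
  "'a set \<Rightarrow> ('a \<Rightarrow> 'a \<Rightarrow> bool) \<Rightarrow> real \<Rightarrow> nat \<Rightarrow> ('a \<Rightarrow> nat \<Rightarrow> real) \<Rightarrow> bool" where
  "vector_coloring V E k d \<phi> \<longleftrightarrow>
     (\<forall>u\<in>V. vec_inner d (\<phi> u) (\<phi> u) = 1) \<and>
     (\<forall>u v. E u v \<longrightarrow> vec_inner d (\<phi> u) (\<phi> v) \<le> - 1 / (k - 1))"

definition vector_colorable :: "'a set \<Rightarrow> ('a \<Rightarrow> 'a \<Rightarrow> bool) \<Rightarrow> real \<Rightarrow> bool" where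
  "vector_colorable V E k \<longleftrightarrow> k > 1 \<and> (\<exists>d \<phi>. vector_coloring V E k d \<phi>)"

definition chi_vec :: "'a set \<Rightarrow> ('a \<Rightarrow> 'a \<Rightarrow> bool) \<Rightarrow> real" where
  "chi_vec V E = (if \<not> (\<exists>u v. E u v) then 1 else Inf {k. vector_colorable V E k})"

end

theory Submission
  imports Defs "HOL-Computational_Algebra.Polynomial" "HOL-Library.Function_Algebras"
    "HOL-Analysis.Convex"
begin

text \<open>
  Let \<open>G\<close> be a one-homogeneous graph with an edge, adjacency matrix \<open>A\<close>, degree \<open>d\<close> and least
  eigenvalue \<open>\<theta> < 0\<close>. The eigenvalue \<open>\<theta>\<close> is a root of the minimal polynomial of \<open>A\<close>, so some
  nonzero polynomial \<open>R\<close> in \<open>A\<close> satisfies \<open>A R = \<theta> R\<close>. By one-homogeneity every polynomial in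
  \<open>A\<close> is constant on the diagonal and on the edges; for the Gram matrix \<open>R\<^sup>2\<close> of the columns of
  \<open>R\<close> this makes the normalised columns a vector \<open>(1 - d / \<theta>)\<close>-colouring of \<open>G\<close>.

  Colourings of either factor lift to \<open>G \<times> H\<close>. Conversely, \<open>A \<otimes> B\<close> is \<open>d\<^sub>G d\<^sub>H\<close>-regular and,
  as \<open>\<theta>\<^sub>G \<le> A \<le> d\<^sub>G\<close> and \<open>\<theta>\<^sub>H \<le> B \<le> d\<^sub>H\<close>, its least eigenvalue is at least
  \<open>min (\<theta>\<^sub>G d\<^sub>H) (d\<^sub>G \<theta>\<^sub>H)\<close>. Hoffman's bound \<open>\<chi>\<^sub>v\<^sub>e\<^sub>c \<ge> 1 - d / \<theta>\<close> for regular graphs then gives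
  \<open>\<chi>\<^sub>v\<^sub>e\<^sub>c (G \<times> H) \<ge> min (1 - d\<^sub>G / \<theta>\<^sub>G) (1 - d\<^sub>H / \<theta>\<^sub>H) \<ge> min (\<chi>\<^sub>v\<^sub>e\<^sub>c G) (\<chi>\<^sub>v\<^sub>e\<^sub>c H)\<close>.
\<close>

subsection \<open>Matrices indexed by a finite set\<close>

type_synonym 'a sqmat = "'a \<Rightarrow> 'a \<Rightarrow> real"

text \<open>A matrix indexed by a finite set \<open>V\<close> is a function of two arguments; products and
  identities only look at \<open>V \<times> V\<close> and vanish outside it.\<close>

definition mat_mult :: "'a set \<Rightarrow> 'a sqmat \<Rightarrow> 'a sqmat \<Rightarrow> 'a sqmat" where
  "mat_mult V M N = (\<lambda>u v. if u \<in> V \<and> v \<in> V then (\<Sum>w\<in>V. M u w * N w v) else 0)"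

definition mat_one :: "'a set \<Rightarrow> 'a sqmat" where
  "mat_one V = (\<lambda>u v. if u = v \<and> u \<in> V then 1 else 0)"

definition mat_scale :: "real \<Rightarrow> 'a sqmat \<Rightarrow> 'a sqmat" where
  "mat_scale c M = (\<lambda>u v. c * M u v)"

definition supported :: "'a set \<Rightarrow> 'a sqmat \<Rightarrow> bool" where
  "supported V M \<longleftrightarrow> (\<forall>u v. u \<notin> V \<or> v \<notin> V \<longrightarrow> M u v = 0)"

definition symmetric_mat :: "'a sqmat \<Rightarrow> bool" where
  "symmetric_mat M \<longleftrightarrow> (\<forall>u v. M u v = M v u)"

fun mat_pow :: "'a set \<Rightarrow> 'a sqmat \<Rightarrow> nat \<Rightarrow> 'a sqmat" where
  "mat_pow V A 0 = mat_one V"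
| "mat_pow V A (Suc k) = mat_mult V A (mat_pow V A k)"

lemma sum_fun_apply2: "(\<Sum>i\<in>I. f i) u v = (\<Sum>i\<in>I. (f i u v :: real))"
  by (induction I rule: infinite_finite_induct) auto

lemma mat_scale_apply [simp]: "mat_scale c M u v = c * M u v"
  by (simp add: mat_scale_def)

lemma supported_mat_mult [simp]: "supported V (mat_mult V M N)"
  unfolding supported_def mat_mult_def by auto

lemma supported_mat_one [simp]: "supported V (mat_one V)"
  unfolding supported_def mat_one_def by auto

lemma supported_mat_pow [simp]: "supported V (mat_pow V A k)"
  by (cases k) auto

lemma mat_mult_assoc:
  assumes "finite V"
  shows "mat_mult V (mat_mult V M N) P = mat_mult V M (mat_mult V N P)"
proof (intro ext)
  fix u v
  show "mat_mult V (mat_mult V M N) P u v = mat_mult V M (mat_mult V N P) u v"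
  proof (cases "u \<in> V \<and> v \<in> V")
    case True
    have "mat_mult V (mat_mult V M N) P u v = (\<Sum>w\<in>V. \<Sum>x\<in>V. M u x * N x w * P w v)"
      using True by (auto simp: mat_mult_def sum_distrib_right intro!: sum.cong)
    also have "\<dots> = (\<Sum>x\<in>V. \<Sum>w\<in>V. M u x * N x w * P w v)"
      by (rule sum.swap)
    also have "\<dots> = mat_mult V M (mat_mult V N P) u v"
      using True by (auto simp: mat_mult_def sum_distrib_left mult.assoc intro!: sum.cong)
    finally show ?thesis .
  qed (auto simp: mat_mult_def)
qed

lemma mat_mult_add_left: "mat_mult V (M + N) P = mat_mult V M P + mat_mult V N P"
  by (auto simp: mat_mult_def fun_eq_iff sum.distrib distrib_right)

lemma mat_mult_diff_left: "mat_mult V (M - N) P = mat_mult V M P - mat_mult V N P"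
  by (auto simp: mat_mult_def fun_eq_iff sum_subtractf left_diff_distrib)

lemma mat_mult_scale_left: "mat_mult V (mat_scale c M) P = mat_scale c (mat_mult V M P)"
  by (auto simp: mat_mult_def fun_eq_iff sum_distrib_left mult.assoc)

lemma mat_mult_scale_right: "mat_mult V P (mat_scale c M) = mat_scale c (mat_mult V P M)"
  by (auto simp: mat_mult_def fun_eq_iff sum_distrib_left mult.left_commute)

lemma mat_scale_zero [simp]: "mat_scale 0 M = 0"
  by (auto simp: fun_eq_iff)

lemma mat_mult_zero_right [simp]: "mat_mult V P 0 = 0"
  by (auto simp: mat_mult_def fun_eq_iff)

lemma mat_mult_sum_right:
  "finite I \<Longrightarrow> mat_mult V P (\<Sum>i\<in>I. f i) = (\<Sum>i\<in>I. mat_mult V P (f i))"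
  by (auto simp: fun_eq_iff mat_mult_def sum_fun_apply2 sum_distrib_left intro!: sum.swap)

lemma mat_mult_one_left:
  assumes "finite V" "supported V M"
  shows "mat_mult V (mat_one V) M = M"
  using assms by (auto simp: fun_eq_iff mat_mult_def mat_one_def supported_def
      if_distrib[of "\<lambda>c. c * _"] cong: if_cong)

lemma mat_mult_one_right:
  assumes "finite V" "supported V M"
  shows "mat_mult V M (mat_one V) = M"
  using assms by (auto simp: fun_eq_iff mat_mult_def mat_one_def supported_def if_distrib
      cong: if_cong)

lemma mat_pow_Suc_right:
  assumes "finite V" "supported V A"
  shows "mat_pow V A (Suc k) = mat_mult V (mat_pow V A k) A"
proof (induction k)
  case 0
  show ?case using assms by (simp add: mat_mult_one_left mat_mult_one_right)
next
  case (Suc k)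
  have "mat_mult V (mat_pow V A (Suc k)) A = mat_mult V A (mat_mult V (mat_pow V A k) A)"
    by (simp add: mat_mult_assoc[OF assms(1)])
  then show ?case using Suc by simp
qed

lemma symmetric_mat_pow:
  assumes "finite V" "supported V A" "symmetric_mat A"
  shows "symmetric_mat (mat_pow V A k)"
proof (induction k)
  case 0
  show ?case by (auto simp: symmetric_mat_def mat_one_def)
next
  case (Suc k)
  have "mat_mult V A (mat_pow V A k) u v = mat_mult V (mat_pow V A k) A v u" for u v
    using Suc assms(3) unfolding symmetric_mat_def by (auto simp: mat_mult_def mult.commute)
  then show ?case
    using mat_pow_Suc_right[OF assms(1,2), of k] unfolding symmetric_mat_def by simp
qed

definition poly_mat :: "'a set \<Rightarrow> 'a sqmat \<Rightarrow> real poly \<Rightarrow> 'a sqmat" where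
  "poly_mat V A p = (\<Sum>i\<le>degree p. mat_scale (coeff p i) (mat_pow V A i))"

lemma supported_poly_mat [simp]: "supported V (poly_mat V A p)"
  using supported_mat_pow[of V A] unfolding supported_def poly_mat_def
  by (auto simp: sum_fun_apply2 intro!: sum.neutral)

lemma poly_mat_upto:
  assumes "degree p < n"
  shows "poly_mat V A p = (\<Sum>i<n. mat_scale (coeff p i) (mat_pow V A i))"
proof -
  have "(\<Sum>i<n. mat_scale (coeff p i) (mat_pow V A i))
      = (\<Sum>i\<le>degree p. mat_scale (coeff p i) (mat_pow V A i))"
    using assms by (intro sum.mono_neutral_right) (auto simp: coeff_eq_0)
  then show ?thesis unfolding poly_mat_def by simp
qed

lemma poly_mat_add: "poly_mat V A (p + q) = poly_mat V A p + poly_mat V A q"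
proof -
  define n where "n = Suc (max (degree p) (degree q))"
  have "degree (p + q) < n" "degree p < n" "degree q < n"
    using degree_add_le_max[of p q] by (auto simp: n_def)
  then show ?thesis
    by (simp add: poly_mat_upto sum.distrib[symmetric] fun_eq_iff sum_fun_apply2 distrib_right)
qed

lemma poly_mat_smult: "poly_mat V A (smult c p) = mat_scale c (poly_mat V A p)"
proof -
  have d: "degree (smult c p) < Suc (degree p)" "degree p < Suc (degree p)"
    using degree_smult_le[of c p] by auto
  show ?thesis
    unfolding poly_mat_upto[OF d(1)] poly_mat_upto[OF d(2)]
    by (simp add: fun_eq_iff sum_fun_apply2 sum_distrib_left mult.assoc del: sum.lessThan_Suc)
qed

lemma poly_mat_diff: "poly_mat V A (p - q) = poly_mat V A p - poly_mat V A q"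
proof -
  have "p - q = p + smult (-1) q" by simp
  then have "poly_mat V A (p - q) = poly_mat V A p + mat_scale (-1) (poly_mat V A q)"
    by (simp only: poly_mat_add poly_mat_smult)
  then show ?thesis by (simp add: fun_eq_iff)
qed

lemma poly_mat_0 [simp]: "poly_mat V A 0 = 0"
  unfolding poly_mat_def by simp

lemma poly_mat_const: "poly_mat V A [:c:] = mat_scale c (mat_one V)"
  unfolding poly_mat_def by simp

lemma poly_mat_pCons_0: "poly_mat V A (pCons 0 p) = mat_mult V A (poly_mat V A p)"
proof -
  have "degree (pCons 0 p) < Suc (Suc (degree p))"
    by (simp add: degree_pCons_le le_imp_less_Suc)
  then have "poly_mat V A (pCons 0 p)
      = (\<Sum>i<Suc (Suc (degree p)). mat_scale (coeff (pCons 0 p) i) (mat_pow V A i))"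
    by (rule poly_mat_upto)
  also have "\<dots>
      = (\<Sum>i<Suc (degree p). mat_scale (coeff (pCons 0 p) (Suc i)) (mat_pow V A (Suc i)))"
    by (subst sum.lessThan_Suc_shift) simp
  also have "\<dots> = mat_mult V A (poly_mat V A p)"
    by (simp add: mat_mult_sum_right mat_mult_scale_right poly_mat_upto[of p "Suc (degree p)"]
        del: sum.lessThan_Suc)
  finally show ?thesis .
qed

lemma poly_mat_pCons:
  "poly_mat V A (pCons c p) = mat_scale c (mat_one V) + mat_mult V A (poly_mat V A p)"
proof -
  have "pCons c p = [:c:] + pCons 0 p" by simp
  then show ?thesis by (metis poly_mat_add poly_mat_const poly_mat_pCons_0)
qed

lemma poly_mat_mult:
  assumes "finite V"
  shows "poly_mat V A (p * q) = mat_mult V (poly_mat V A p) (poly_mat V A q)"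
proof (induction p rule: pCons_induct)
  case 0
  then show ?case by (simp add: fun_eq_iff mat_mult_def poly_mat_def)
next
  case (pCons c p)
  have "pCons c p * q = smult c q + pCons 0 (p * q)" by simp
  then have "poly_mat V A (pCons c p * q)
      = mat_scale c (poly_mat V A q) + mat_mult V A (poly_mat V A (p * q))"
    by (simp add: poly_mat_add poly_mat_smult poly_mat_pCons_0)
  also have "\<dots> = mat_scale c (poly_mat V A q)
      + mat_mult V A (mat_mult V (poly_mat V A p) (poly_mat V A q))"
    using pCons by simp
  also have "\<dots> = mat_mult V (poly_mat V A (pCons c p)) (poly_mat V A q)"
    by (simp add: poly_mat_pCons mat_mult_add_left mat_mult_scale_left
        mat_mult_one_left[OF assms supported_poly_mat] mat_mult_assoc[OF assms])
  finally show ?case .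
qed

lemma poly_mat_monom:
  assumes "finite V" "supported V A"
  shows "poly_mat V A (monom 1 k) = mat_pow V A k"
proof (induction k)
  case 0
  then show ?case by (simp add: poly_mat_def fun_eq_iff)
next
  case (Suc k)
  have "monom (1::real) (Suc k) = pCons 0 (monom 1 k)" by (simp add: monom_Suc)
  then show ?case using Suc by (simp add: poly_mat_pCons_0)
qed

lemma poly_mat_linear:
  assumes "finite V" "supported V A"
  shows "poly_mat V A [:-c, 1:] = A - mat_scale c (mat_one V)"
  using mat_mult_one_right[OF assms]
  by (simp add: poly_mat_pCons poly_mat_const mat_mult_scale_right fun_eq_iff)

lemma symmetric_poly_mat:
  assumes "finite V" "supported V A" "symmetric_mat A"
  shows "symmetric_mat (poly_mat V A p)"
  using symmetric_mat_pow[OF assms] unfolding poly_mat_def symmetric_mat_def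
  by (simp add: sum_fun_apply2)

subsection \<open>Annihilating polynomials\<close>

interpretation mat_vs: vector_space "mat_scale :: real \<Rightarrow> 'a sqmat \<Rightarrow> 'a sqmat"
  by unfold_locales (auto simp: mat_scale_def fun_eq_iff algebra_simps)

definition mat_unit :: "'a \<times> 'a \<Rightarrow> 'a sqmat" where
  "mat_unit = (\<lambda>(a, b) u v. if u = a \<and> v = b then 1 else 0)"

lemma supported_in_span_mat_units:
  assumes "finite V" "supported V M"
  shows "M \<in> mat_vs.span (mat_unit ` (V \<times> V))"
proof -
  have "M = (\<Sum>p\<in>V \<times> V. mat_scale (M (fst p) (snd p)) (mat_unit p))"
  proof (intro ext)
    fix u v
    have "(\<Sum>p\<in>V \<times> V. mat_scale (M (fst p) (snd p)) (mat_unit p)) u v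
        = (\<Sum>p\<in>V \<times> V. M (fst p) (snd p) * (if p = (u, v) then 1 else 0))"
      by (auto simp: sum_fun_apply2 mat_unit_def case_prod_beta prod_eq_iff intro!: sum.cong)
    also have "\<dots> = M u v"
      using assms unfolding supported_def by (auto simp: if_distrib cong: if_cong)
    finally show "M u v = (\<Sum>p\<in>V \<times> V. mat_scale (M (fst p) (snd p)) (mat_unit p)) u v" ..
  qed
  also have "\<dots> \<in> mat_vs.span (mat_unit ` (V \<times> V))"
    by (intro mat_vs.span_sum mat_vs.span_scale mat_vs.span_base) auto
  finally show ?thesis .
qed

text \<open>Either two powers of \<open>A\<close> coincide, or the \<open>|V|\<^sup>2 + 1\<close> powers \<open>A\<^sup>0, \<dots>, A\<^bsup>|V|\<^sup>2\<^esup>\<close> are linearly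
  dependent in the span of the \<open>|V|\<^sup>2\<close> matrix units.\<close>

lemma annihilating_poly_exists:
  assumes "finite V" "supported V A"
  obtains q :: "real poly" where "q \<noteq> 0" "poly_mat V A q = 0"
proof (cases "inj_on (mat_pow V A) {..card (V \<times> V)}")
  case False
  then obtain i j where ij: "i \<noteq> j" "mat_pow V A i = mat_pow V A j"
    unfolding inj_on_def by blast
  have "monom 1 j - monom 1 i \<noteq> (0 :: real poly)"
    using ij(1) by (metis coeff_monom diff_eq_eq add_0 coeff_add zero_neq_one)
  moreover have "poly_mat V A (monom 1 j - monom 1 i) = 0"
    using ij by (simp add: poly_mat_diff poly_mat_monom[OF assms])
  ultimately show ?thesis using that by blast
next
  case True
  define N where "N = card (V \<times> V)"
  define P where "P = mat_pow V A ` {..N}"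
  have "finite P" by (simp add: P_def)
  have "card P = Suc N" using True unfolding P_def N_def by (simp add: card_image)
  moreover have "P \<subseteq> mat_vs.span (mat_unit ` (V \<times> V))"
    unfolding P_def using supported_in_span_mat_units[OF assms(1)] by auto
  moreover have "card (mat_unit ` (V \<times> V)) \<le> N"
    unfolding N_def by (rule card_image_le) (simp add: assms(1))
  ultimately have "mat_vs.dependent P"
    using mat_vs.independent_span_bound[of "mat_unit ` (V \<times> V)" P] assms(1) by auto
  then obtain c where c: "\<exists>v\<in>P. c v \<noteq> 0" "(\<Sum>v\<in>P. mat_scale (c v) v) = 0"
    using mat_vs.dependent_finite[OF \<open>finite P\<close>] by blast
  define q :: "real poly" where "q = (\<Sum>k\<le>N. monom (c (mat_pow V A k)) k)"
  have coeff_q: "coeff q k = (if k \<le> N then c (mat_pow V A k) else 0)" for k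
    unfolding q_def by (simp add: coeff_sum coeff_monom)
  have "q \<noteq> 0"
    using c(1) coeff_q unfolding P_def by (metis atMost_iff coeff_0 imageE)
  moreover have "poly_mat V A q = 0"
  proof -
    have "degree q < Suc N" by (simp add: coeff_q degree_le le_imp_less_Suc)
    then have "poly_mat V A q = (\<Sum>k\<le>N. mat_scale (c (mat_pow V A k)) (mat_pow V A k))"
      by (simp add: poly_mat_upto coeff_q lessThan_Suc_atMost)
    also have "\<dots> = (\<Sum>v\<in>P. mat_scale (c v) v)"
      unfolding P_def N_def using True by (simp add: sum.reindex)
    finally show ?thesis using c(2) by simp
  qed
  ultimately show ?thesis using that by blast
qed

definition bilin_form :: "'a set \<Rightarrow> 'a sqmat \<Rightarrow> ('a \<Rightarrow> real) \<Rightarrow> ('a \<Rightarrow> real) \<Rightarrow> real" where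
  "bilin_form V M x y = (\<Sum>u\<in>V. \<Sum>v\<in>V. M u v * x u * y v)"

abbreviation quad_form :: "'a set \<Rightarrow> 'a sqmat \<Rightarrow> ('a \<Rightarrow> real) \<Rightarrow> real" where
  "quad_form V M x \<equiv> bilin_form V M x x"

definition sq_norm :: "'a set \<Rightarrow> ('a \<Rightarrow> real) \<Rightarrow> real" where
  "sq_norm V x = (\<Sum>u\<in>V. (x u)\<^sup>2)"

definition mat_vec :: "'a set \<Rightarrow> 'a sqmat \<Rightarrow> ('a \<Rightarrow> real) \<Rightarrow> 'a \<Rightarrow> real" where
  "mat_vec V M x = (\<lambda>u. \<Sum>v\<in>V. M u v * x v)"

definition psd :: "'a set \<Rightarrow> 'a sqmat \<Rightarrow> bool" where
  "psd V M \<longleftrightarrow> (\<forall>x. 0 \<le> quad_form V M x)"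

lemma bilin_form_cong: "(\<And>w. w \<in> V \<Longrightarrow> x w = y w) \<Longrightarrow> bilin_form V M x x = bilin_form V M y y"
  unfolding bilin_form_def by (auto intro!: sum.cong)

lemma bilin_form_add: "bilin_form V (M + N) x y = bilin_form V M x y + bilin_form V N x y"
  unfolding bilin_form_def by (simp add: sum.distrib distrib_right)

lemma bilin_form_diff: "bilin_form V (M - N) x y = bilin_form V M x y - bilin_form V N x y"
  unfolding bilin_form_def by (simp add: sum_subtractf left_diff_distrib)

lemma bilin_form_scale: "bilin_form V (mat_scale c M) x y = c * bilin_form V M x y"
  unfolding bilin_form_def by (simp add: sum_distrib_left mult.assoc)

lemma bilin_form_mat_vec:
  assumes "finite V"
  shows "bilin_form V M x (mat_vec V N y) = bilin_form V (mat_mult V M N) x y"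
proof -
  have "bilin_form V M x (mat_vec V N y) = (\<Sum>u\<in>V. \<Sum>v\<in>V. \<Sum>w\<in>V. M u v * x u * (N v w * y w))"
    by (simp add: bilin_form_def mat_vec_def sum_distrib_left)
  also have "\<dots> = (\<Sum>u\<in>V. \<Sum>w\<in>V. \<Sum>v\<in>V. M u v * x u * (N v w * y w))"
    by (rule sum.cong[OF refl], rule sum.swap)
  also have "\<dots> = (\<Sum>u\<in>V. \<Sum>w\<in>V. (\<Sum>v\<in>V. M u v * N v w) * x u * y w)"
    by (simp add: sum_distrib_left sum_distrib_right mult_ac)
  also have "\<dots> = bilin_form V (mat_mult V M N) x y"
    unfolding bilin_form_def
    by (rule sum.cong[OF refl], rule sum.cong[OF refl]) (simp add: mat_mult_def)
  finally show ?thesis .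
qed

lemma sum_mult_delta: "finite V \<Longrightarrow> v \<in> V \<Longrightarrow> (\<Sum>w\<in>V. f w * (if w = v then 1 else 0)) = (f v :: real)"
  by (simp add: if_distrib cong: if_cong)

lemma bilin_form_mat_one:
  assumes "finite V"
  shows "bilin_form V (mat_one V) x y = (\<Sum>u\<in>V. x u * y u)"
proof -
  have "bilin_form V (mat_one V) x y = (\<Sum>u\<in>V. \<Sum>v\<in>V. (x u * y v) * (if v = u then 1 else 0))"
    unfolding bilin_form_def by (intro sum.cong refl) (auto simp: mat_one_def)
  also have "\<dots> = (\<Sum>u\<in>V. x u * y u)"
    using assms by (intro sum.cong refl) (simp add: sum_mult_delta)
  finally show ?thesis .
qed

lemma quad_form_mat_one: "finite V \<Longrightarrow> quad_form V (mat_one V) x = sq_norm V x"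
  by (simp add: bilin_form_mat_one sq_norm_def power2_eq_square)

lemma bilin_form_left_mat_vec: "bilin_form V M x y = (\<Sum>u\<in>V. x u * mat_vec V M y u)"
  unfolding bilin_form_def mat_vec_def by (simp add: sum_distrib_left mult_ac)

lemma sq_norm_nonneg: "0 \<le> sq_norm V x"
  unfolding sq_norm_def by (auto intro: sum_nonneg)

lemma quad_form_eq_0_if_sq_norm_eq_0:
  assumes "finite V" "sq_norm V x = 0"
  shows "quad_form V M x = 0"
proof -
  have "\<forall>u\<in>V. x u = 0" using assms unfolding sq_norm_def by (simp add: sum_nonneg_eq_0_iff)
  then show ?thesis unfolding bilin_form_def by simp
qed

lemma abs_quad_form_le:
  assumes "finite V"
  shows "\<bar>quad_form V M x\<bar> \<le> (\<Sum>u\<in>V. \<Sum>v\<in>V. \<bar>M u v\<bar>) * sq_norm V x"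
proof -
  have xx: "\<bar>x u * x v\<bar> \<le> sq_norm V x" if "u \<in> V" "v \<in> V" for u v
  proof -
    have "\<bar>x u * x v\<bar> \<le> ((x u)\<^sup>2 + (x v)\<^sup>2) / 2"
    proof -
      have "0 \<le> (\<bar>x u\<bar> - \<bar>x v\<bar>)\<^sup>2" by simp
      then show ?thesis by (simp add: power2_eq_square abs_mult algebra_simps)
    qed
    also have "\<dots> \<le> sq_norm V x"
    proof -
      have "(x u)\<^sup>2 \<le> sq_norm V x" "(x v)\<^sup>2 \<le> sq_norm V x"
        unfolding sq_norm_def using assms that by (auto intro!: member_le_sum)
      then show ?thesis by simp
    qed
    finally show ?thesis .
  qed
  have "\<bar>quad_form V M x\<bar> \<le> (\<Sum>u\<in>V. \<Sum>v\<in>V. \<bar>M u v * x u * x v\<bar>)"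
    unfolding bilin_form_def by (rule order_trans[OF sum_abs]) (intro sum_mono sum_abs)
  also have "\<dots> \<le> (\<Sum>u\<in>V. \<Sum>v\<in>V. \<bar>M u v\<bar> * sq_norm V x)"
    using xx by (intro sum_mono) (auto simp: abs_mult mult.assoc intro!: mult_left_mono)
  also have "\<dots> = (\<Sum>u\<in>V. \<Sum>v\<in>V. \<bar>M u v\<bar>) * sq_norm V x"
    by (simp add: sum_distrib_right)
  finally show ?thesis .
qed

lemma quad_form_two_point:
  assumes "finite V" "u \<in> V" "v \<in> V" "u \<noteq> v" "\<And>w. w \<noteq> u \<Longrightarrow> w \<noteq> v \<Longrightarrow> x w = 0"
  shows "quad_form V M x = M u u * (x u)\<^sup>2 + (M u v + M v u) * x u * x v + M v v * (x v)\<^sup>2"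
proof -
  have inner: "(\<Sum>b\<in>V. M a b * x a * x b) = (\<Sum>b\<in>{u,v}. M a b * x a * x b)" for a
    using assms by (intro sum.mono_neutral_right) auto
  have "quad_form V M x = (\<Sum>a\<in>V. \<Sum>b\<in>{u,v}. M a b * x a * x b)"
    unfolding bilin_form_def using inner by simp
  also have "\<dots> = (\<Sum>a\<in>{u,v}. \<Sum>b\<in>{u,v}. M a b * x a * x b)"
    using assms by (intro sum.mono_neutral_right) auto
  also have "\<dots> = M u u * (x u)\<^sup>2 + (M u v + M v u) * x u * x v + M v v * (x v)\<^sup>2"
    using assms(4) by (simp add: power2_eq_square algebra_simps)
  finally show ?thesis .
qed

lemma sq_norm_two_point:
  assumes "finite V" "u \<in> V" "v \<in> V" "u \<noteq> v" "\<And>w. w \<noteq> u \<Longrightarrow> w \<noteq> v \<Longrightarrow> x w = 0"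
  shows "sq_norm V x = (x u)\<^sup>2 + (x v)\<^sup>2"
proof -
  have "sq_norm V x = (\<Sum>a\<in>{u,v}. (x a)\<^sup>2)"
    unfolding sq_norm_def using assms by (intro sum.mono_neutral_right) auto
  then show ?thesis using assms(4) by simp
qed

lemma quad_form_unit:
  assumes "finite V" "u \<in> V"
  shows "quad_form V M (\<lambda>w. if w = u then 1 else 0) = M u u"
proof -
  let ?d = "\<lambda>w. if w = u then 1 else (0::real)"
  have "(\<Sum>b\<in>V. M a b * ?d a * ?d b) = M a u * ?d a" for a
    using sum_mult_delta[OF assms, of "\<lambda>b. M a b * ?d a"] by simp
  then have "quad_form V M ?d = (\<Sum>a\<in>V. M a u * ?d a)" unfolding bilin_form_def by simp
  also have "\<dots> = M u u" using sum_mult_delta[OF assms, of "\<lambda>a. M a u"] by simp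
  finally show ?thesis .
qed

lemma sq_norm_unit: "finite V \<Longrightarrow> u \<in> V \<Longrightarrow> sq_norm V (\<lambda>w. if w = u then 1 else 0) = 1"
  unfolding sq_norm_def using sum_mult_delta[of V u "\<lambda>_. 1"]
  by (simp add: if_distrib[of "\<lambda>t. t\<^sup>2"] cong: if_cong)

subsection \<open>Positive semidefinite matrices\<close>

lemma psd_subset:
  assumes "finite V" "psd V M" "S \<subseteq> V"
  shows "psd S M"
  unfolding psd_def
proof
  fix x
  define y :: "'a \<Rightarrow> real" where "y w = (if w \<in> S then x w else 0)" for w
  have "quad_form V M y = (\<Sum>u\<in>S. \<Sum>v\<in>V. M u v * y u * y v)"
    unfolding bilin_form_def using assms(1,3) by (intro sum.mono_neutral_right) (auto simp: y_def)
  also have "\<dots> = (\<Sum>u\<in>S. \<Sum>v\<in>S. M u v * y u * y v)"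
    using assms(1,3) by (intro sum.cong refl sum.mono_neutral_right) (auto simp: y_def)
  also have "\<dots> = quad_form S M x"
    unfolding bilin_form_def y_def by (intro sum.cong) auto
  finally have "quad_form S M x = quad_form V M y" ..
  then show "0 \<le> quad_form S M x" using assms(2) unfolding psd_def by simp
qed

lemma psd_row_zero_if_diag_zero:
  assumes "finite V" "symmetric_mat M" "psd V M" "u \<in> V" "v \<in> V" "M u u = 0"
  shows "M u v = 0"
proof (rule ccontr)
  assume ne: "M u v \<noteq> 0"
  then have "u \<noteq> v" using assms(6) by auto
  define t where "t = - (M v v + 1) / (2 * M u v)"
  define x where "x w = (if w = u then t else if w = v then 1 else 0)" for w
  have "quad_form V M x = 2 * t * M u v + M v v"
    using quad_form_two_point[OF assms(1,4,5) \<open>u \<noteq> v\<close>, of x M] assms(2,6) \<open>u \<noteq> v\<close>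
    unfolding symmetric_mat_def by (simp add: x_def)
  also have "\<dots> = -1" using ne by (simp add: t_def field_simps)
  finally show False using assms(3) unfolding psd_def by (metis neg_0_le_iff_le not_one_le_zero)
qed

lemma quad_form_insert:
  assumes "finite S" "u \<notin> S" "symmetric_mat M"
  shows "quad_form (insert u S) M x
    = M u u * (x u)\<^sup>2 + 2 * x u * (\<Sum>v\<in>S. M u v * x v) + quad_form S M x"
proof -
  have "quad_form (insert u S) M x = (\<Sum>v\<in>insert u S. M u v * x u * x v)
         + (\<Sum>w\<in>S. \<Sum>v\<in>insert u S. M w v * x w * x v)"
    unfolding bilin_form_def using assms by simp
  also have "\<dots> = (M u u * x u * x u + (\<Sum>v\<in>S. M u v * x u * x v))
         + (\<Sum>w\<in>S. M w u * x w * x u + (\<Sum>v\<in>S. M w v * x w * x v))"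
    using assms by simp
  also have "\<dots> = M u u * (x u)\<^sup>2 + x u * (\<Sum>v\<in>S. M u v * x v)
         + x u * (\<Sum>v\<in>S. M v u * x v) + quad_form S M x"
    unfolding bilin_form_def by (simp add: sum.distrib sum_distrib_left power2_eq_square algebra_simps)
  also have "(\<Sum>v\<in>S. M v u * x v) = (\<Sum>v\<in>S. M u v * x v)"
    using assms(3) unfolding symmetric_mat_def by simp
  finally show ?thesis by simp
qed

lemma psd_schur_complement:
  assumes "finite S" "u \<notin> S" "symmetric_mat M" "psd (insert u S) M" "M u u > 0"
  shows "psd S (\<lambda>a b. M a b - M a u * M u b / M u u)"
  unfolding psd_def
proof
  fix x
  define c where "c = M u u"
  define l where "l = (\<Sum>v\<in>S. M u v * x v)"
  have "quad_form S (\<lambda>a b. M a b - M a u * M u b / c) x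
      = quad_form S M x - (\<Sum>a\<in>S. M u a * x a) * (\<Sum>b\<in>S. M u b * x b) / c"
    using assms(3) unfolding bilin_form_def symmetric_mat_def
    by (simp add: sum_subtractf left_diff_distrib sum_product sum_divide_distrib algebra_simps)
  also have "\<dots> = quad_form (insert u S) M (x(u := - l / c))"
  proof -
    have "quad_form S M (x(u := - l / c)) = quad_form S M x"
      using assms(2) by (intro bilin_form_cong) auto
    moreover have "(\<Sum>v\<in>S. M u v * (x(u := - l / c)) v) = l"
      unfolding l_def using assms(2) by (intro sum.cong) auto
    ultimately show ?thesis
      using assms(5) quad_form_insert[OF assms(1-3), of "x(u := - l / c)"]
      by (simp add: c_def l_def power2_eq_square field_simps)
  qed
  finally show "0 \<le> quad_form S (\<lambda>a b. M a b - M a u * M u b / M u u) x"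
    using assms(4) unfolding psd_def c_def by simp
qed

definition gram_matrix :: "'a set \<Rightarrow> 'a sqmat \<Rightarrow> bool" where
  "gram_matrix V M \<longleftrightarrow> (\<exists>(L :: nat \<Rightarrow> 'a \<Rightarrow> real) m. \<forall>u\<in>V. \<forall>v\<in>V. M u v = (\<Sum>j<m. L j u * L j v))"

lemma gram_matrix_insert_zero_row:
  assumes "gram_matrix S M" "u \<notin> S" "symmetric_mat M" "\<And>v. v \<in> insert u S \<Longrightarrow> M u v = 0"
  shows "gram_matrix (insert u S) M"
proof -
  obtain L and m :: nat where L: "\<forall>a\<in>S. \<forall>b\<in>S. M a b = (\<Sum>j<m. L j a * L j b)"
    using assms(1) unfolding gram_matrix_def by blast
  define L' where "L' j w = (if w = u then 0 else L j w)" for j w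
  have "M a b = (\<Sum>j<m. L' j a * L' j b)" if "a \<in> insert u S" "b \<in> insert u S" for a b
  proof (cases "a = u \<or> b = u")
    case True
    have "M a b = 0"
    proof (cases "a = u")
      case False
      then have "b = u" using True by simp
      then show ?thesis using assms(3) assms(4)[OF that(1)] unfolding symmetric_mat_def by simp
    qed (use assms(4)[OF that(2)] in simp)
    then show ?thesis using True by (auto simp: L'_def)
  next
    case False
    then show ?thesis using L that by (simp add: L'_def)
  qed
  then show ?thesis unfolding gram_matrix_def by blast
qed

lemma gram_matrix_insert_schur:
  assumes "gram_matrix S (\<lambda>a b. M a b - M a u * M u b / M u u)"
    and "u \<notin> S" "symmetric_mat M" "M u u > 0"
  shows "gram_matrix (insert u S) M"
proof -
  define c where "c = M u u"
  obtain L and m :: nat where L: "\<forall>a\<in>S. \<forall>b\<in>S. M a b - M a u * M u b / c = (\<Sum>j<m. L j a * L j b)"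
    using assms(1) unfolding gram_matrix_def c_def by blast
  define L' where "L' j w = (if j < m then (if w = u then 0 else L j w) else M u w / sqrt c)" for j w
  have "M a b = (\<Sum>j<Suc m. L' j a * L' j b)" if "a \<in> insert u S" "b \<in> insert u S" for a b
  proof -
    have sym: "M a u = M u a" using assms(3) unfolding symmetric_mat_def by simp
    have "(\<Sum>j<Suc m. L' j a * L' j b)
        = (\<Sum>j<m. (if a = u then 0 else L j a) * (if b = u then 0 else L j b)) + M u a * M u b / c"
      using assms(4) by (simp add: L'_def c_def real_sqrt_mult[symmetric] power2_eq_square[symmetric]
          del: real_sqrt_mult)
    moreover have "M a b
        = (\<Sum>j<m. (if a = u then 0 else L j a) * (if b = u then 0 else L j b)) + M u a * M u b / c"
    proof (cases "a = u \<or> b = u")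
      case True
      then show ?thesis using sym assms(4) by (auto simp: c_def)
    next
      case False
      then have "a \<in> S" "b \<in> S" using that by auto
      then have "M a b - M a u * M u b / c = (\<Sum>j<m. L j a * L j b)" using L by blast
      then show ?thesis using sym False by (simp add: diff_eq_eq)
    qed
    ultimately show ?thesis by simp
  qed
  then show ?thesis unfolding gram_matrix_def by blast
qed

lemma gram_matrix_if_psd:
  assumes "finite V" "symmetric_mat M" "psd V M"
  shows "gram_matrix V M"
  using assms
proof (induction V arbitrary: M rule: finite_induct)
  case empty
  then show ?case by (simp add: gram_matrix_def)
next
  case (insert u S M)
  have fin: "finite (insert u S)" using insert.hyps(1) by simp
  have "0 \<le> M u u"
    using insert.prems(2) quad_form_unit[OF fin insertI1, of M] unfolding psd_def by metis
  then consider "M u u = 0" | "M u u > 0" by linarith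
  then show ?case
  proof cases
    case 1
    have "gram_matrix S M"
      using insert.IH[OF insert.prems(1) psd_subset[OF fin insert.prems(2) subset_insertI]] .
    then show ?thesis
      using gram_matrix_insert_zero_row[OF _ insert.hyps(2) insert.prems(1)]
        psd_row_zero_if_diag_zero[OF fin insert.prems insertI1 _ 1] by blast
  next
    case 2
    have "symmetric_mat (\<lambda>a b. M a b - M a u * M u b / M u u)"
      using insert.prems(1) unfolding symmetric_mat_def by (simp add: mult.commute)
    then show ?thesis
      using insert.IH psd_schur_complement[OF insert.hyps insert.prems 2]
        gram_matrix_insert_schur[OF _ insert.hyps(2) insert.prems(1) 2] by blast
  qed
qed

lemma bilin_form_gram:
  assumes "\<forall>u\<in>V. \<forall>v\<in>V. M u v = (\<Sum>t\<in>T. f t u * f t v)"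
  shows "bilin_form V M x y = (\<Sum>t\<in>T. (\<Sum>u\<in>V. f t u * x u) * (\<Sum>v\<in>V. f t v * y v))"
proof -
  have "bilin_form V M x y = (\<Sum>u\<in>V. \<Sum>v\<in>V. \<Sum>t\<in>T. f t u * f t v * x u * y v)"
    unfolding bilin_form_def using assms by (auto simp: sum_distrib_right intro!: sum.cong)
  also have "\<dots> = (\<Sum>u\<in>V. \<Sum>t\<in>T. \<Sum>v\<in>V. f t u * f t v * x u * y v)"
    by (rule sum.cong[OF refl], rule sum.swap)
  also have "\<dots> = (\<Sum>t\<in>T. \<Sum>u\<in>V. \<Sum>v\<in>V. f t u * f t v * x u * y v)"
    by (rule sum.swap)
  also have "\<dots> = (\<Sum>t\<in>T. (\<Sum>u\<in>V. f t u * x u) * (\<Sum>v\<in>V. f t v * y v))"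
    by (simp add: sum_product mult_ac)
  finally show ?thesis .
qed

lemma psd_cauchy_schwarz:
  assumes "finite V" "symmetric_mat M" "psd V M"
  shows "(bilin_form V M x y)\<^sup>2 \<le> quad_form V M x * quad_form V M y"
proof -
  obtain L and m :: nat where L: "\<forall>u\<in>V. \<forall>v\<in>V. M u v = (\<Sum>j<m. L j u * L j v)"
    using gram_matrix_if_psd[OF assms] unfolding gram_matrix_def by blast
  show ?thesis
    unfolding bilin_form_gram[OF L]
    using Cauchy_Schwarz_ineq_sum[of "\<lambda>j. \<Sum>u\<in>V. L j u * x u" "\<lambda>j. \<Sum>v\<in>V. L j v * y v"]
    by (simp add: power2_eq_square)
qed

definition kron :: "'a sqmat \<Rightarrow> 'b sqmat \<Rightarrow> ('a \<times> 'b) sqmat" where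
  "kron M N = (\<lambda>p q. M (fst p) (fst q) * N (snd p) (snd q))"

lemma psd_kron:
  assumes "finite V" "symmetric_mat M" "psd V M"
    and "finite W" "symmetric_mat N" "psd W N"
  shows "psd (V \<times> W) (kron M N)"
proof -
  obtain L and m :: nat where L: "\<forall>u\<in>V. \<forall>v\<in>V. M u v = (\<Sum>j<m. L j u * L j v)"
    using gram_matrix_if_psd[OF assms(1-3)] unfolding gram_matrix_def by blast
  obtain K and n :: nat where K: "\<forall>u\<in>W. \<forall>v\<in>W. N u v = (\<Sum>j<n. K j u * K j v)"
    using gram_matrix_if_psd[OF assms(4-6)] unfolding gram_matrix_def by blast
  define f where "f t p = L (fst t) (fst p) * K (snd t) (snd p)" for t :: "nat \<times> nat" and p
  have "kron M N p q = (\<Sum>t\<in>{..<m} \<times> {..<n}. f t p * f t q)" if "p \<in> V \<times> W" "q \<in> V \<times> W" for p q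
  proof -
    have "kron M N p q = (\<Sum>j<m. L j (fst p) * L j (fst q)) * (\<Sum>i<n. K i (snd p) * K i (snd q))"
      unfolding kron_def using L K that by auto
    also have "\<dots> = (\<Sum>j<m. \<Sum>i<n. (L j (fst p) * L j (fst q)) * (K i (snd p) * K i (snd q)))"
      by (rule sum_product)
    also have "\<dots> = (\<Sum>t\<in>{..<m} \<times> {..<n}. f t p * f t q)"
      unfolding sum.cartesian_product f_def by (auto simp: mult_ac intro!: sum.cong)
    finally show ?thesis .
  qed
  then show ?thesis
    unfolding psd_def using bilin_form_gram[where T="{..<m} \<times> {..<n}" and f=f]
    by (auto intro!: sum_nonneg)
qed

subsection \<open>The least eigenvalue of a symmetric matrix\<close>

text \<open>For symmetric \<open>A\<close> this is the least eigenvalue, defined variationally through the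
  Rayleigh quotient.\<close>

definition min_eig :: "'a set \<Rightarrow> 'a sqmat \<Rightarrow> real" where
  "min_eig V A = Sup {c. \<forall>x. c * sq_norm V x \<le> quad_form V A x}"

lemma
  assumes "finite V" "V \<noteq> {}"
  shows quad_form_ge_min_eig: "min_eig V A * sq_norm V x \<le> quad_form V A x"
    and min_eig_greatest: "(\<And>x. c * sq_norm V x \<le> quad_form V A x) \<Longrightarrow> c \<le> min_eig V A"
proof -
  define C where "C = {c. \<forall>x. c * sq_norm V x \<le> quad_form V A x}"
  obtain u where u: "u \<in> V" using assms(2) by blast
  have bdd: "bdd_above C"
  proof
    fix c assume "c \<in> C"
    then have "c * sq_norm V (\<lambda>w. if w = u then 1 else 0)
        \<le> quad_form V A (\<lambda>w. if w = u then 1 else 0)"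
      unfolding C_def by blast
    then show "c \<le> A u u"
      using quad_form_unit[OF assms(1) u, of A] sq_norm_unit[OF assms(1) u] by simp
  qed
  have "- (\<Sum>u\<in>V. \<Sum>v\<in>V. \<bar>A u v\<bar>) \<in> C"
    using abs_quad_form_le[OF assms(1), of A] unfolding C_def by (simp add: abs_le_iff minus_le_iff)
  then have ne: "C \<noteq> {}" by blast
  show "min_eig V A * sq_norm V x \<le> quad_form V A x"
  proof (cases "sq_norm V x = 0")
    case True
    then show ?thesis using quad_form_eq_0_if_sq_norm_eq_0[OF assms(1)] by simp
  next
    case False
    then have pos: "sq_norm V x > 0" using sq_norm_nonneg[of V x] by simp
    have "min_eig V A \<le> quad_form V A x / sq_norm V x"
      unfolding min_eig_def C_def[symmetric]
    proof (rule cSup_least[OF ne])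
      fix c assume "c \<in> C"
      then show "c \<le> quad_form V A x / sq_norm V x"
        using pos unfolding C_def by (simp add: field_simps)
    qed
    then show ?thesis using pos by (simp add: field_simps)
  qed
  show "c \<le> min_eig V A" if "\<And>x. c * sq_norm V x \<le> quad_form V A x"
    unfolding min_eig_def C_def[symmetric] using that by (intro cSup_upper[OF _ bdd]) (simp add: C_def)
qed

text \<open>If \<open>Q R = 1\<close>, then \<open>\<parallel>x\<parallel>\<^sup>2 = x\<^sup>T Q (R x)\<close>, and Cauchy-Schwarz for the form \<open>Q\<close> gives
  \<open>\<parallel>x\<parallel>\<^sup>4 \<le> x\<^sup>T Q x \<cdot> x\<^sup>T R x\<close>.\<close>

lemma psd_coercive_if_right_inverse:
  assumes "finite V" "V \<noteq> {}" "symmetric_mat Q" "psd V Q" "mat_mult V Q R = mat_one V"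
  obtains \<epsilon> where "\<epsilon> > 0" "\<And>x. \<epsilon> * sq_norm V x \<le> quad_form V Q x"
proof -
  define K where "K = (\<Sum>u\<in>V. \<Sum>v\<in>V. \<bar>R u v\<bar>)"
  have key: "(sq_norm V x)\<^sup>2 \<le> quad_form V Q x * (K * sq_norm V x)" for x
  proof -
    have "bilin_form V Q x (mat_vec V R x) = sq_norm V x"
      by (simp add: bilin_form_mat_vec[OF assms(1)] assms(5) quad_form_mat_one[OF assms(1)])
    then have "(sq_norm V x)\<^sup>2 \<le> quad_form V Q x * quad_form V Q (mat_vec V R x)"
      using psd_cauchy_schwarz[OF assms(1,3,4), of x "mat_vec V R x"] by simp
    also have "quad_form V Q (mat_vec V R x) = quad_form V R x"
      using bilin_form_mat_vec[OF assms(1), of Q "mat_vec V R x" R x]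
      by (simp add: assms(5) bilin_form_mat_one[OF assms(1)] bilin_form_left_mat_vec[of V R x x]
          mult.commute)
    also have "\<dots> \<le> K * sq_norm V x"
      unfolding K_def using abs_quad_form_le[OF assms(1), of R x] by simp
    finally show ?thesis
      using assms(4) unfolding psd_def by (simp add: mult_left_mono)
  qed
  obtain u where u: "u \<in> V" using assms(2) by blast
  have "K > 0"
  proof -
    have "1 \<le> quad_form V Q (\<lambda>w. if w = u then 1 else 0) * K"
      using key[of "\<lambda>w. if w = u then 1 else 0"] sq_norm_unit[OF assms(1) u] by simp
    moreover have "K \<ge> 0" unfolding K_def by (intro sum_nonneg) auto
    ultimately show ?thesis by (cases "K = 0") auto
  qed
  have "1 / K * sq_norm V x \<le> quad_form V Q x" for x
  proof (cases "sq_norm V x = 0")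
    case True
    then show ?thesis using quad_form_eq_0_if_sq_norm_eq_0[OF assms(1) True] by simp
  next
    case False
    then have "sq_norm V x > 0" using sq_norm_nonneg[of V x] by simp
    then have "sq_norm V x \<le> quad_form V Q x * K"
      using key[of x] by (simp add: power2_eq_square mult_ac)
    then show ?thesis using \<open>K > 0\<close> by (simp add: field_simps)
  qed
  with \<open>K > 0\<close> show ?thesis using that[of "1 / K"] by simp
qed

lemma min_eig_root:
  assumes "finite V" "V \<noteq> {}" "supported V A" "symmetric_mat A" "poly_mat V A q = 0"
  shows "poly q (min_eig V A) = 0"
proof (rule ccontr)
  define \<mu> where "\<mu> = min_eig V A"
  define Q where "Q = poly_mat V A [:-\<mu>, 1:]"
  assume "poly q \<mu> \<noteq> 0"
  define c where "c = poly q \<mu>"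
  have "[:-\<mu>, 1:] dvd q - [:c:]"
    by (simp add: c_def poly_eq_0_iff_dvd[symmetric])
  then obtain s where s: "q - [:c:] = [:-\<mu>, 1:] * s" by (auto elim: dvdE)
  have "mat_mult V Q (poly_mat V A s) = poly_mat V A (q - [:c:])"
    unfolding s Q_def poly_mat_mult[OF assms(1)] ..
  also have "\<dots> = mat_scale (-c) (mat_one V)"
    using assms(5) by (simp add: poly_mat_diff poly_mat_const fun_eq_iff)
  finally have inverse: "mat_mult V Q (mat_scale (-1/c) (poly_mat V A s)) = mat_one V"
    unfolding mat_mult_scale_right using \<open>poly q \<mu> \<noteq> 0\<close> by (simp add: c_def fun_eq_iff)
  have Q: "Q = A - mat_scale \<mu> (mat_one V)"
    unfolding Q_def by (rule poly_mat_linear[OF assms(1,3)])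
  have "symmetric_mat Q"
    using assms(4) unfolding Q symmetric_mat_def mat_one_def by simp
  moreover have quad_Q: "quad_form V Q x = quad_form V A x - \<mu> * sq_norm V x" for x
    by (simp add: Q bilin_form_diff bilin_form_scale quad_form_mat_one[OF assms(1)])
  moreover have "psd V Q"
    unfolding psd_def quad_Q using quad_form_ge_min_eig[OF assms(1,2)] by (simp add: \<mu>_def)
  ultimately obtain \<epsilon> where "\<epsilon> > 0" "\<And>x. \<epsilon> * sq_norm V x \<le> quad_form V Q x"
    using psd_coercive_if_right_inverse[OF assms(1,2) _ _ inverse] by blast
  then have "\<mu> + \<epsilon> \<le> \<mu>"
    unfolding \<mu>_def using min_eig_greatest[OF assms(1,2)] quad_Q \<mu>_def
    by (smt (verit, best) distrib_right)
  then show False using \<open>\<epsilon> > 0\<close> by simp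
qed

lemma min_eig_eigenmatrix:
  assumes "finite V" "V \<noteq> {}" "supported V A" "symmetric_mat A"
  obtains r where "poly_mat V A r \<noteq> 0"
    "mat_mult V A (poly_mat V A r) = mat_scale (min_eig V A) (poly_mat V A r)"
proof -
  obtain q0 :: "real poly" where "q0 \<noteq> 0" "poly_mat V A q0 = 0"
    using annihilating_poly_exists[OF assms(1,3)] .
  then obtain q where q: "q \<noteq> 0" "poly_mat V A q = 0"
    and q_min: "\<And>q'. q' \<noteq> 0 \<Longrightarrow> poly_mat V A q' = 0 \<Longrightarrow> degree q \<le> degree q'"
    using ex_has_least_nat[of "\<lambda>q. q \<noteq> 0 \<and> poly_mat V A q = 0" q0 degree] by blast
  have "poly q (min_eig V A) = 0" using min_eig_root[OF assms q(2)] .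
  then obtain r where r: "q = [:- min_eig V A, 1:] * r"
    by (auto simp: poly_eq_0_iff_dvd elim: dvdE)
  have "r \<noteq> 0" using q(1) r by auto
  then have "degree q = Suc (degree r)"
    unfolding r by (subst degree_mult_eq) auto
  have "poly_mat V A r \<noteq> 0"
  proof
    assume "poly_mat V A r = 0"
    then have "degree q \<le> degree r" using q_min[OF \<open>r \<noteq> 0\<close>] by blast
    then show False using \<open>degree q = Suc (degree r)\<close> by simp
  qed
  moreover have "mat_mult V (A - mat_scale (min_eig V A) (mat_one V)) (poly_mat V A r) = 0"
    using q(2) unfolding r poly_mat_mult[OF assms(1)] poly_mat_linear[OF assms(1,3)] .
  ultimately show ?thesis
    using that by (simp add: mat_mult_diff_left mat_mult_scale_left
        mat_mult_one_left[OF assms(1) supported_poly_mat])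
qed

definition adj :: "('a \<Rightarrow> 'a \<Rightarrow> bool) \<Rightarrow> 'a sqmat" where
  "adj E = (\<lambda>u v. if E u v then 1 else 0)"

lemma simple_graph_finite: "simple_graph V E \<Longrightarrow> finite V"
  by (simp add: simple_graph_def)

lemma simple_graph_edge_in: "simple_graph V E \<Longrightarrow> E u v \<Longrightarrow> u \<in> V \<and> v \<in> V"
  by (simp add: simple_graph_def)

lemma simple_graph_edge_sym: "simple_graph V E \<Longrightarrow> E u v \<Longrightarrow> E v u"
  by (simp add: simple_graph_def)

lemma simple_graph_irrefl: "simple_graph V E \<Longrightarrow> \<not> E u u"
  by (simp add: simple_graph_def)

lemma supported_adj: "simple_graph V E \<Longrightarrow> supported V (adj E)"
  unfolding supported_def adj_def simple_graph_def by auto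

lemma symmetric_adj: "simple_graph V E \<Longrightarrow> symmetric_mat (adj E)"
  unfolding symmetric_mat_def adj_def simple_graph_def by auto

lemma mat_pow_adj:
  assumes "simple_graph V E" "u \<in> V" "v \<in> V"
  shows "mat_pow V (adj E) k u v = real (walks V E k u v)"
  using assms(2)
proof (induction k arbitrary: u)
  case 0
  then show ?case using assms(3) by (simp add: mat_one_def)
next
  case (Suc k)
  have "mat_pow V (adj E) (Suc k) u v = (\<Sum>w\<in>V. if E u w then real (walks V E k w v) else 0)"
    using Suc assms(3) by (auto simp: mat_mult_def adj_def intro!: sum.cong)
  also have "\<dots> = (\<Sum>w\<in>{w\<in>V. E u w}. real (walks V E k w v))"
    using simple_graph_finite[OF assms(1)] by (simp add: sum.inter_filter)
  also have "\<dots> = real (walks V E (Suc k) u v)" by simp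
  finally show ?case .
qed

lemma poly_mat_adj:
  assumes "simple_graph V E" "u \<in> V" "v \<in> V"
  shows "poly_mat V (adj E) p u v = (\<Sum>i\<le>degree p. coeff p i * real (walks V E i u v))"
  unfolding poly_mat_def using mat_pow_adj[OF assms] by (simp add: sum_fun_apply2)

lemma one_homogeneous_poly_mat_diag:
  assumes "simple_graph V E" "one_homogeneous V E" "u \<in> V" "u' \<in> V"
  shows "poly_mat V (adj E) p u u = poly_mat V (adj E) p u' u'"
proof -
  have "walks V E i u u = walks V E i u' u'" for i
    using assms(2-4) unfolding one_homogeneous_def by blast
  then show ?thesis
    unfolding poly_mat_adj[OF assms(1,3,3)] poly_mat_adj[OF assms(1,4,4)] by simp
qed

lemma one_homogeneous_poly_mat_edge:
  assumes "simple_graph V E" "one_homogeneous V E" "E u v" "E u' v'"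
  shows "poly_mat V (adj E) p u v = poly_mat V (adj E) p u' v'"
proof -
  have "u \<in> V" "v \<in> V" "u' \<in> V" "v' \<in> V"
    using simple_graph_edge_in[OF assms(1)] assms(3,4) by auto
  moreover have "walks V E i u v = walks V E i u' v'" for i
    using assms(2-4) unfolding one_homogeneous_def by blast
  ultimately show ?thesis
    unfolding poly_mat_adj[OF assms(1) \<open>u \<in> V\<close> \<open>v \<in> V\<close>]
      poly_mat_adj[OF assms(1) \<open>u' \<in> V\<close> \<open>v' \<in> V\<close>] by simp
qed

text \<open>The degree of \<open>u\<close> is the number of closed walks of length 2 at \<open>u\<close>.\<close>

lemma one_homogeneous_regular:
  assumes "simple_graph V E" "one_homogeneous V E" "u \<in> V" "u' \<in> V"
  shows "(\<Sum>w\<in>V. adj E u w) = (\<Sum>w\<in>V. adj E u' w)"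
proof -
  have "(\<Sum>w\<in>V. adj E x w) = real (walks V E 2 x x)" if "x \<in> V" for x
  proof -
    have one: "mat_mult V (adj E) (mat_one V) = adj E"
      by (rule mat_mult_one_right[OF simple_graph_finite[OF assms(1)] supported_adj[OF assms(1)]])
    have "real (walks V E 2 x x) = mat_pow V (adj E) 2 x x"
      by (rule mat_pow_adj[OF assms(1) that that, symmetric])
    also have "\<dots> = mat_mult V (adj E) (adj E) x x"
      by (simp add: numeral_2_eq_2 one)
    also have "\<dots> = (\<Sum>w\<in>V. adj E x w)"
      using that simple_graph_edge_sym[OF assms(1)]
      by (auto simp: mat_mult_def adj_def intro!: sum.cong)
    finally show ?thesis ..
  qed
  moreover have "walks V E 2 u u = walks V E 2 u' u'"
    using assms(2-4) unfolding one_homogeneous_def by blast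
  ultimately show ?thesis using assms(3,4) by simp
qed

lemma quad_form_le_row_sum:
  assumes "symmetric_mat M" "\<And>u v. M u v \<ge> 0" "\<And>u. u \<in> V \<Longrightarrow> (\<Sum>v\<in>V. M u v) = d"
  shows "quad_form V M x \<le> d * sq_norm V x"
proof -
  have row: "(\<Sum>u\<in>V. \<Sum>v\<in>V. M u v * (x u)\<^sup>2) = d * sq_norm V x"
    using assms(3) by (simp add: sum_distrib_right[symmetric] sq_norm_def sum_distrib_left)
  have col: "(\<Sum>u\<in>V. \<Sum>v\<in>V. M u v * (x v)\<^sup>2) = d * sq_norm V x"
    using row assms(1) unfolding symmetric_mat_def by (subst sum.swap) simp
  have "0 \<le> (\<Sum>u\<in>V. \<Sum>v\<in>V. M u v * (x u - x v)\<^sup>2)"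
    using assms(2) by (intro sum_nonneg mult_nonneg_nonneg) auto
  also have "\<dots> = (\<Sum>u\<in>V. \<Sum>v\<in>V. M u v * (x u)\<^sup>2) + (\<Sum>u\<in>V. \<Sum>v\<in>V. M u v * (x v)\<^sup>2)
      - 2 * quad_form V M x"
    unfolding bilin_form_def
    by (simp add: power2_eq_square algebra_simps sum.distrib sum_subtractf sum_distrib_left)
  finally show ?thesis unfolding row col by linarith
qed

subsection \<open>Kronecker products\<close>

lemma kron_mat_one: "kron (mat_one V) (mat_one W) = mat_one (V \<times> W)"
  by (auto simp: fun_eq_iff kron_def mat_one_def prod_eq_iff)

lemma sum_kron_row:
  assumes "p \<in> V \<times> W"
  shows "(\<Sum>q\<in>V \<times> W. kron M N p q) = (\<Sum>v\<in>V. M (fst p) v) * (\<Sum>w\<in>W. N (snd p) w)"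
proof -
  have "(\<Sum>q\<in>V \<times> W. kron M N p q) = (\<Sum>v\<in>V. \<Sum>w\<in>W. M (fst p) v * N (snd p) w)"
    unfolding kron_def sum.cartesian_product by (simp add: case_prod_beta)
  then show ?thesis by (simp add: sum_product)
qed

text \<open>With the positive semidefinite matrices \<open>X\<^sub>1 = p - A\<close>, \<open>X\<^sub>2 = A - a\<close>, \<open>Y\<^sub>1 = q - B\<close>,
  \<open>Y\<^sub>2 = B - b\<close> one has \<open>(p - a) A = p X\<^sub>2 + a X\<^sub>1\<close> and \<open>p - a = X\<^sub>1 + X\<^sub>2\<close>, and likewise for \<open>B\<close>.
  Expanding exhibits \<open>(p - a) (q - b) (A \<otimes> B - m)\<close> as a combination of the \<open>X\<^sub>i \<otimes> Y\<^sub>j\<close> with the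
  coefficients \<open>p q - m, p b - m, a q - m, a b - m\<close>, which are nonnegative for \<open>m = min (a q) (p b)\<close>.\<close>

lemma quad_form_kron_ge:
  fixes A :: "'a sqmat" and B :: "'b sqmat"
  assumes "finite V" "finite W" "symmetric_mat A" "symmetric_mat B"
    and "\<And>x. a * sq_norm V x \<le> quad_form V A x" "\<And>x. quad_form V A x \<le> p * sq_norm V x"
    and "\<And>y. b * sq_norm W y \<le> quad_form W B y" "\<And>y. quad_form W B y \<le> q * sq_norm W y"
    and "a < 0" "0 < p" "b < 0" "0 < q"
  shows "min (a * q) (p * b) * sq_norm (V \<times> W) z \<le> quad_form (V \<times> W) (kron A B) z"
proof -
  define m where "m = min (a * q) (p * b)"
  define X1 where "X1 = mat_scale p (mat_one V) - A"
  define X2 where "X2 = A - mat_scale a (mat_one V)"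
  define Y1 where "Y1 = mat_scale q (mat_one W) - B"
  define Y2 where "Y2 = B - mat_scale b (mat_one W)"
  have sym: "symmetric_mat X1" "symmetric_mat X2" "symmetric_mat Y1" "symmetric_mat Y2"
    using assms(3,4) unfolding X1_def X2_def Y1_def Y2_def symmetric_mat_def mat_one_def by auto
  have "psd V X1" "psd V X2" "psd W Y1" "psd W Y2"
    using assms(5-8) unfolding psd_def X1_def X2_def Y1_def Y2_def
    by (simp_all add: bilin_form_diff bilin_form_scale quad_form_mat_one assms(1,2))
  then have psd: "0 \<le> quad_form (V \<times> W) (kron X Y) z"
    if "X \<in> {X1, X2}" "Y \<in> {Y1, Y2}" for X Y
    using that psd_kron[OF assms(1) _ _ assms(2)] sym unfolding psd_def by blast
  have "mat_scale ((p - a) * (q - b)) (kron A B - mat_scale m (mat_one (V \<times> W)))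
      = mat_scale (p * q - m) (kron X2 Y2) + mat_scale (p * b - m) (kron X2 Y1)
        + mat_scale (a * q - m) (kron X1 Y2) + mat_scale (a * b - m) (kron X1 Y1)"
    unfolding kron_mat_one[symmetric] X1_def X2_def Y1_def Y2_def
    by (simp add: fun_eq_iff kron_def) algebra
  then have "quad_form (V \<times> W) (mat_scale ((p - a) * (q - b))
      (kron A B - mat_scale m (mat_one (V \<times> W)))) z
      = quad_form (V \<times> W) (mat_scale (p * q - m) (kron X2 Y2) + mat_scale (p * b - m) (kron X2 Y1)
        + mat_scale (a * q - m) (kron X1 Y2) + mat_scale (a * b - m) (kron X1 Y1)) z"
    by (rule arg_cong)
  then have "(p - a) * (q - b) * (quad_form (V \<times> W) (kron A B) z - m * sq_norm (V \<times> W) z)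
      = (p * q - m) * quad_form (V \<times> W) (kron X2 Y2) z
        + (p * b - m) * quad_form (V \<times> W) (kron X2 Y1) z
        + (a * q - m) * quad_form (V \<times> W) (kron X1 Y2) z
        + (a * b - m) * quad_form (V \<times> W) (kron X1 Y1) z"
    by (simp add: bilin_form_add bilin_form_diff bilin_form_scale quad_form_mat_one assms(1,2))
  also have "\<dots> \<ge> 0"
    using psd assms(9-12)
    by (intro add_nonneg_nonneg mult_nonneg_nonneg) (auto simp: m_def min_def mult_neg_neg
        intro: order.trans[OF _ less_imp_le[OF mult_pos_pos]])
  finally have "0 \<le> (p - a) * (q - b) * (quad_form (V \<times> W) (kron A B) z - m * sq_norm (V \<times> W) z)" .
  moreover have "0 < (p - a) * (q - b)" using assms(9-12) by simp
  ultimately show ?thesis by (simp add: m_def zero_le_mult_iff)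
qed

subsection \<open>Vector colourings\<close>

lemma vector_colorable_if_gram:
  fixes f :: "'a \<Rightarrow> 'b \<Rightarrow> real"
  assumes "finite I" "1 < k" "0 < c"
    and "\<And>u. u \<in> V \<Longrightarrow> (\<Sum>i\<in>I. (f u i)\<^sup>2) = c"
    and "\<And>u v. E u v \<Longrightarrow> (\<Sum>i\<in>I. f u i * f v i) \<le> - c / (k - 1)"
  shows "vector_colorable V E k"
proof -
  obtain g where g: "bij_betw g {0..<card I} I"
    using ex_bij_betw_nat_finite[OF assms(1)] by blast
  define \<phi> where "\<phi> u j = f u (g j) / sqrt c" for u j
  have inner: "vec_inner (card I) (\<phi> u) (\<phi> v) = (\<Sum>i\<in>I. f u i * f v i) / c" for u v
  proof -
    have "vec_inner (card I) (\<phi> u) (\<phi> v) = (\<Sum>j\<in>{0..<card I}. f u (g j) * f v (g j)) / c"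
      unfolding vec_inner_def \<phi>_def using assms(3)
      by (simp add: lessThan_atLeast0 sum_divide_distrib real_sqrt_mult[symmetric]
          power2_eq_square[symmetric] del: real_sqrt_mult)
    also have "\<dots> = (\<Sum>i\<in>I. f u i * f v i) / c"
      using sum.reindex_bij_betw[OF g, of "\<lambda>i. f u i * f v i"] by simp
    finally show ?thesis .
  qed
  have "vector_coloring V E k (card I) \<phi>"
    unfolding vector_coloring_def inner
    using assms(2-5) by (auto simp: power2_eq_square divide_le_eq)
  then show ?thesis using assms(2) unfolding vector_colorable_def by blast
qed

lemma sum_sq_norm_coordinates:
  "(\<Sum>i<n. sq_norm V (\<lambda>u. \<psi> u i)) = (\<Sum>u\<in>V. vec_inner n (\<psi> u) (\<psi> u))"
  unfolding sq_norm_def vec_inner_def power2_eq_square by (rule sum.swap)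

lemma sum_quad_form_coordinates:
  "(\<Sum>i<n. quad_form V M (\<lambda>u. \<psi> u i)) = (\<Sum>u\<in>V. \<Sum>v\<in>V. M u v * vec_inner n (\<psi> u) (\<psi> v))"
proof -
  have "(\<Sum>i<n. quad_form V M (\<lambda>u. \<psi> u i)) = (\<Sum>u\<in>V. \<Sum>i<n. \<Sum>v\<in>V. M u v * \<psi> u i * \<psi> v i)"
    unfolding bilin_form_def by (rule sum.swap)
  also have "\<dots> = (\<Sum>u\<in>V. \<Sum>v\<in>V. \<Sum>i<n. M u v * \<psi> u i * \<psi> v i)"
    by (rule sum.cong[OF refl], rule sum.swap)
  also have "\<dots> = (\<Sum>u\<in>V. \<Sum>v\<in>V. M u v * vec_inner n (\<psi> u) (\<psi> v))"
    unfolding vec_inner_def by (simp add: sum_distrib_left mult.assoc)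
  finally show ?thesis .
qed

text \<open>Hoffman's bound for vector colourings: summing the Rayleigh bound over the coordinates of a
  vector colouring gives \<open>\<mu> |V| \<le> \<Sum>\<^sub>u\<^sub>v A\<^sub>u\<^sub>v \<langle>\<phi> u, \<phi> v\<rangle> \<le> - d |V| / (k - 1)\<close>.\<close>

lemma vector_colorable_ge_hoffman:
  assumes "simple_graph V E" "V \<noteq> {}" "\<And>u. u \<in> V \<Longrightarrow> (\<Sum>v\<in>V. adj E u v) = d"
    and "\<And>x. \<mu> * sq_norm V x \<le> quad_form V (adj E) x" "\<mu> < 0"
    and "vector_colorable V E k"
  shows "1 - d / \<mu> \<le> k"
proof -
  obtain n \<psi> where col: "vector_coloring V E k n \<psi>" and "1 < k"
    using assms(6) unfolding vector_colorable_def by blast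
  define N where "N = real (card V)"
  have "0 < N" unfolding N_def using simple_graph_finite[OF assms(1)] assms(2) by (simp add: card_gt_0_iff)
  have "\<mu> * N = (\<Sum>i<n. \<mu> * sq_norm V (\<lambda>u. \<psi> u i))"
    using col unfolding sum_distrib_left[symmetric] sum_sq_norm_coordinates N_def
      vector_coloring_def by simp
  also have "\<dots> \<le> (\<Sum>i<n. quad_form V (adj E) (\<lambda>u. \<psi> u i))"
    by (intro sum_mono assms(4))
  also have "\<dots> \<le> (\<Sum>u\<in>V. \<Sum>v\<in>V. adj E u v * (- 1 / (k - 1)))"
    unfolding sum_quad_form_coordinates
    using col unfolding vector_coloring_def by (intro sum_mono) (simp add: adj_def)
  also have "\<dots> = (\<Sum>u\<in>V. d * (- 1 / (k - 1)))"
    by (intro sum.cong refl) (simp only: sum_distrib_right[symmetric] assms(3))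
  also have "\<dots> = N * d * (- 1 / (k - 1))"
    by (simp add: N_def)
  finally have "N * (\<mu> * (k - 1)) \<le> N * (- d)"
    using \<open>1 < k\<close> by (simp add: field_simps)
  then have "\<mu> * (k - 1) \<le> - d"
    using \<open>0 < N\<close> by (rule mult_left_le_imp_le)
  then show ?thesis using assms(5) by (simp add: field_simps)
qed

lemma chi_vec_le: "vector_colorable V E k \<Longrightarrow> chi_vec V E \<le> k"
  unfolding chi_vec_def vector_colorable_def
  by (auto intro!: cInf_lower simp: bdd_below_def intro: less_imp_le)

lemma le_chi_vec:
  assumes "\<exists>u v. E u v" "vector_colorable V E k0" "\<And>k. vector_colorable V E k \<Longrightarrow> c \<le> k"
  shows "c \<le> chi_vec V E"
  unfolding chi_vec_def using assms by (auto intro!: cInf_greatest)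

lemma chi_vec_ge_one: "vector_colorable V E k0 \<Longrightarrow> 1 \<le> chi_vec V E"
  unfolding chi_vec_def by (auto intro!: cInf_greatest simp: vector_colorable_def)

lemma simple_graph_cat_prod:
  "simple_graph V E \<Longrightarrow> simple_graph W F
    \<Longrightarrow> simple_graph (cat_prod_verts V W) (cat_prod_edges E F)"
  unfolding simple_graph_def cat_prod_verts_def cat_prod_edges_def by auto

lemma adj_cat_prod: "adj (cat_prod_edges E F) = kron (adj E) (adj F)"
  by (auto simp: fun_eq_iff adj_def kron_def cat_prod_edges_def)

lemma vector_colorable_cat_prod_left:
  assumes "vector_colorable V E k"
  shows "vector_colorable (cat_prod_verts V W) (cat_prod_edges E F) k"
proof -
  obtain d \<phi> where "vector_coloring V E k d \<phi>" "k > 1"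
    using assms unfolding vector_colorable_def by blast
  then have "vector_coloring (cat_prod_verts V W) (cat_prod_edges E F) k d (\<lambda>p. \<phi> (fst p))"
    unfolding vector_coloring_def cat_prod_verts_def cat_prod_edges_def by auto
  then show ?thesis using \<open>k > 1\<close> unfolding vector_colorable_def by blast
qed

lemma vector_colorable_cat_prod_right:
  assumes "vector_colorable W F k"
  shows "vector_colorable (cat_prod_verts V W) (cat_prod_edges E F) k"
proof -
  obtain d \<phi> where "vector_coloring W F k d \<phi>" "k > 1"
    using assms unfolding vector_colorable_def by blast
  then have "vector_coloring (cat_prod_verts V W) (cat_prod_edges E F) k d (\<lambda>p. \<phi> (snd p))"
    unfolding vector_coloring_def cat_prod_verts_def cat_prod_edges_def by auto
  then show ?thesis using \<open>k > 1\<close> unfolding vector_colorable_def by blast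
qed

lemma chi_vec_cat_prod_le_left:
  assumes "\<exists>u v. E u v" "vector_colorable V E k0"
  shows "chi_vec (cat_prod_verts V W) (cat_prod_edges E F) \<le> chi_vec V E"
  using le_chi_vec[OF assms] chi_vec_le[OF vector_colorable_cat_prod_left] by blast

lemma chi_vec_cat_prod_le_right:
  assumes "\<exists>u v. F u v" "vector_colorable W F k0"
  shows "chi_vec (cat_prod_verts V W) (cat_prod_edges E F) \<le> chi_vec W F"
  using le_chi_vec[OF assms] chi_vec_le[OF vector_colorable_cat_prod_right] by blast

subsection \<open>One-homogeneous graphs\<close>

locale one_homogeneous_graph =
  fixes V :: "'a set" and E :: "'a \<Rightarrow> 'a \<Rightarrow> bool" and u0 v0 :: 'a
  assumes simple: "simple_graph V E" and homogeneous: "one_homogeneous V E" and edge: "E u0 v0"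
begin

lemma finite_vertices: "finite V"
  using simple by (rule simple_graph_finite)

lemma edge_in: "u0 \<in> V" "v0 \<in> V"
  using simple_graph_edge_in[OF simple edge] by auto

definition deg :: real where
  "deg = (\<Sum>w\<in>V. adj E u0 w)"

lemma row_sum: "u \<in> V \<Longrightarrow> (\<Sum>w\<in>V. adj E u w) = deg"
  unfolding deg_def using one_homogeneous_regular[OF simple homogeneous _ edge_in(1)] .

lemma deg_pos: "0 < deg"
proof -
  have "adj E u0 v0 \<le> deg"
    unfolding deg_def using finite_vertices edge_in(2) by (intro member_le_sum) (auto simp: adj_def)
  then show ?thesis using edge by (simp add: adj_def)
qed

lemma quad_form_le_deg: "quad_form V (adj E) x \<le> deg * sq_norm V x"
  by (rule quad_form_le_row_sum[OF symmetric_adj[OF simple] _ row_sum]) (simp add: adj_def)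

lemma min_eig_le: "min_eig V (adj E) * sq_norm V x \<le> quad_form V (adj E) x"
  using quad_form_ge_min_eig[OF finite_vertices] edge_in by blast

lemma min_eig_neg: "min_eig V (adj E) < 0"
proof -
  define x where "x w = (if w = u0 then 1 else if w = v0 then -1 else 0 :: real)" for w
  have "u0 \<noteq> v0" using simple_graph_irrefl[OF simple] edge by metis
  have x0: "x w = 0" if "w \<noteq> u0" "w \<noteq> v0" for w using that by (simp add: x_def)
  have "quad_form V (adj E) x = -2"
    using quad_form_two_point[where x = x and M = "adj E", OF finite_vertices edge_in \<open>u0 \<noteq> v0\<close> x0] \<open>u0 \<noteq> v0\<close>
      simple_graph_irrefl[OF simple] simple_graph_edge_sym[OF simple edge] edge
    by (simp add: x_def adj_def)
  moreover have "sq_norm V x = 2"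
    using sq_norm_two_point[where x = x, OF finite_vertices edge_in \<open>u0 \<noteq> v0\<close> x0] \<open>u0 \<noteq> v0\<close> by (simp add: x_def)
  ultimately show ?thesis using min_eig_le[of x] by simp
qed

text \<open>Read off the diagonal entry at \<open>u0\<close> of \<open>A P = \<theta> P\<close>: all entries of \<open>P\<close> on the
  edges at \<open>u0\<close> are equal to \<open>P u0 v0\<close>.\<close>

lemma eigen_poly_edge_entry:
  assumes "mat_mult V (adj E) (poly_mat V (adj E) p) = mat_scale \<theta> (poly_mat V (adj E) p)"
  shows "deg * poly_mat V (adj E) p u0 v0 = \<theta> * poly_mat V (adj E) p u0 u0"
proof -
  define P where "P = poly_mat V (adj E) p"
  have "adj E u0 w * P w u0 = adj E u0 w * P u0 v0" for w
    using one_homogeneous_poly_mat_edge[OF simple homogeneous _ edge, of w u0 p]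
      simple_graph_edge_sym[OF simple, of u0 w]
    unfolding P_def adj_def by auto
  then have "(\<Sum>w\<in>V. adj E u0 w * P w u0) = (\<Sum>w\<in>V. adj E u0 w * P u0 v0)"
    by (intro sum.cong refl)
  then have "mat_mult V (adj E) P u0 u0 = (\<Sum>w\<in>V. adj E u0 w) * P u0 v0"
    using edge_in(1) by (simp add: mat_mult_def sum_distrib_right)
  moreover have "mat_mult V (adj E) P u0 u0 = \<theta> * P u0 u0"
    using fun_cong[OF fun_cong[OF assms], of u0 u0] unfolding P_def by simp
  ultimately show ?thesis unfolding P_def deg_def by simp
qed

text \<open>The columns of a nonzero polynomial \<open>R\<close> in \<open>A\<close> with \<open>A R = \<theta> R\<close>: their Gram matrix
  \<open>R\<^sup>T R = R\<^sup>2\<close> is again a polynomial in \<open>A\<close>, so it is constant on the diagonal and on the edges.\<close>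

lemma eigenmatrix_gram:
  obtains R :: "'a sqmat" and c where "0 < c" "\<And>u. u \<in> V \<Longrightarrow> (\<Sum>w\<in>V. (R w u)\<^sup>2) = c"
    "\<And>u v. E u v \<Longrightarrow> (\<Sum>w\<in>V. R w u * R w v) = min_eig V (adj E) * c / deg"
proof -
  have A: "finite V" "V \<noteq> {}" "supported V (adj E)" "symmetric_mat (adj E)"
    using finite_vertices edge_in supported_adj[OF simple] symmetric_adj[OF simple] by auto
  obtain r where R_ne: "poly_mat V (adj E) r \<noteq> 0" and R_eig:
    "mat_mult V (adj E) (poly_mat V (adj E) r) = mat_scale (min_eig V (adj E)) (poly_mat V (adj E) r)"
    using min_eig_eigenmatrix[OF A] by blast
  define R where "R = poly_mat V (adj E) r"
  have R_sym: "R a b = R b a" for a b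
    using symmetric_poly_mat[OF A(1,3,4), of r] unfolding R_def symmetric_mat_def by simp
  have rr: "poly_mat V (adj E) (r * r) = mat_mult V R R"
    unfolding R_def by (rule poly_mat_mult[OF A(1)])
  have gram: "poly_mat V (adj E) (r * r) u v = (\<Sum>w\<in>V. R w u * R w v)" if "u \<in> V" "v \<in> V" for u v
    using that unfolding rr mat_mult_def by (simp add: R_sym[of u])
  define c where "c = poly_mat V (adj E) (r * r) u0 u0"
  have diag: "(\<Sum>w\<in>V. (R w u)\<^sup>2) = c" if "u \<in> V" for u
    using one_homogeneous_poly_mat_diag[OF simple homogeneous that edge_in(1)] gram[OF that that]
    unfolding c_def by (simp add: power2_eq_square)
  have "c > 0"
  proof -
    obtain w u where "R w u \<noteq> 0" using R_ne unfolding R_def[symmetric] by (auto simp: fun_eq_iff)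
    moreover have "w \<in> V" "u \<in> V"
      using \<open>R w u \<noteq> 0\<close> supported_poly_mat[of V "adj E" r] unfolding R_def supported_def by auto
    ultimately have "0 < (\<Sum>w\<in>V. (R w u)\<^sup>2)"
      using A(1) by (intro sum_pos2[of _ w]) auto
    then show ?thesis using diag[OF \<open>u \<in> V\<close>] by simp
  qed
  have "mat_mult V (adj E) (poly_mat V (adj E) (r * r)) = mat_mult V (mat_mult V (adj E) R) R"
    unfolding rr by (rule mat_mult_assoc[OF A(1), symmetric])
  also have "\<dots> = mat_scale (min_eig V (adj E)) (poly_mat V (adj E) (r * r))"
    unfolding rr R_def R_eig by (rule mat_mult_scale_left)
  finally have edge_value: "deg * poly_mat V (adj E) (r * r) u0 v0 = min_eig V (adj E) * c"
    unfolding c_def by (rule eigen_poly_edge_entry)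
  have edge_gram: "(\<Sum>w\<in>V. R w u * R w v) = min_eig V (adj E) * c / deg" if "E u v" for u v
  proof -
    have "u \<in> V" "v \<in> V" using simple_graph_edge_in[OF simple that] by auto
    then have "(\<Sum>w\<in>V. R w u * R w v) = poly_mat V (adj E) (r * r) u v" by (simp add: gram)
    also have "\<dots> = poly_mat V (adj E) (r * r) u0 v0"
      by (rule one_homogeneous_poly_mat_edge[OF simple homogeneous that edge])
    finally show ?thesis using edge_value deg_pos by (simp add: field_simps)
  qed
  show ?thesis by (rule that[OF \<open>c > 0\<close> diag edge_gram])
qed

lemma vector_colorable: "vector_colorable V E (1 - deg / min_eig V (adj E))"
proof -
  obtain R c where "0 < c" and diag: "\<And>u. u \<in> V \<Longrightarrow> (\<Sum>w\<in>V. (R w u)\<^sup>2) = c"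
    and edge: "\<And>u v. E u v \<Longrightarrow> (\<Sum>w\<in>V. R w u * R w v) = min_eig V (adj E) * c / deg"
    by (rule eigenmatrix_gram) blast
  show ?thesis
  proof (rule vector_colorable_if_gram[OF finite_vertices _ \<open>0 < c\<close> diag])
    show "1 < 1 - deg / min_eig V (adj E)"
      using deg_pos min_eig_neg by (simp add: divide_pos_neg)
    have "min_eig V (adj E) * c / deg = - c / (1 - deg / min_eig V (adj E) - 1)"
      using deg_pos min_eig_neg by (simp add: field_simps)
    then show "(\<Sum>w\<in>V. R w u * R w v) \<le> - c / (1 - deg / min_eig V (adj E) - 1)" if "E u v" for u v
      using edge[OF that] by linarith
  qed
qed

end

lemma one_homogeneous_chi_vec_ge_one:
  assumes "simple_graph V E" "one_homogeneous V E"
  shows "1 \<le> chi_vec V E"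
proof (cases "\<exists>u v. E u v")
  case True
  then obtain u v where "E u v" by blast
  then interpret one_homogeneous_graph V E u v using assms by unfold_locales
  show ?thesis using vector_colorable by (rule chi_vec_ge_one)
qed (simp add: chi_vec_def)

lemma cat_prod_vector_colorable_ge:
  assumes G: "one_homogeneous_graph V E u0 v0" and H: "one_homogeneous_graph W F w0 x0"
    and col: "vector_colorable (cat_prod_verts V W) (cat_prod_edges E F) k"
  shows "min (1 - one_homogeneous_graph.deg V E u0 / min_eig V (adj E))
             (1 - one_homogeneous_graph.deg W F w0 / min_eig W (adj F)) \<le> k"
proof -
  interpret G: one_homogeneous_graph V E u0 v0 by (rule G)
  interpret H: one_homogeneous_graph W F w0 x0 by (rule H)
  define \<mu> where "\<mu> = min (min_eig V (adj E) * H.deg) (G.deg * min_eig W (adj F))"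
  have "\<mu> < 0"
    unfolding \<mu>_def using G.deg_pos G.min_eig_neg H.deg_pos H.min_eig_neg
    by (simp add: min_def mult_neg_pos mult_pos_neg)
  have "1 - G.deg * H.deg / \<mu> \<le> k"
  proof (rule vector_colorable_ge_hoffman)
    show "simple_graph (V \<times> W) (cat_prod_edges E F)"
      using simple_graph_cat_prod[OF G.simple H.simple] by (simp add: cat_prod_verts_def)
    show "V \<times> W \<noteq> {}" using G.edge_in H.edge_in by blast
    show "(\<Sum>q\<in>V \<times> W. adj (cat_prod_edges E F) p q) = G.deg * H.deg" if "p \<in> V \<times> W" for p
      using that unfolding adj_cat_prod sum_kron_row[OF that] by (auto simp: G.row_sum H.row_sum)
    show "\<mu> * sq_norm (V \<times> W) z \<le> quad_form (V \<times> W) (adj (cat_prod_edges E F)) z" for z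
      unfolding \<mu>_def adj_cat_prod
      by (rule quad_form_kron_ge[OF G.finite_vertices H.finite_vertices symmetric_adj[OF G.simple]
            symmetric_adj[OF H.simple] G.min_eig_le G.quad_form_le_deg H.min_eig_le
            H.quad_form_le_deg G.min_eig_neg G.deg_pos H.min_eig_neg H.deg_pos])
    show "\<mu> < 0" by fact
    show "vector_colorable (V \<times> W) (cat_prod_edges E F) k"
      using col by (simp add: cat_prod_verts_def)
  qed
  moreover have "min (1 - G.deg / min_eig V (adj E)) (1 - H.deg / min_eig W (adj F))
      \<le> 1 - G.deg * H.deg / \<mu>"
    unfolding \<mu>_def using G.deg_pos H.deg_pos by (auto simp: min_def)
  ultimately show ?thesis by linarith
qed

lemma min_chi_vec_le_cat_prod:
  assumes G: "one_homogeneous_graph V E u0 v0" and H: "one_homogeneous_graph W F w0 x0"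
  shows "min (chi_vec V E) (chi_vec W F) \<le> chi_vec (cat_prod_verts V W) (cat_prod_edges E F)"
proof -
  interpret G: one_homogeneous_graph V E u0 v0 by (rule G)
  interpret H: one_homogeneous_graph W F w0 x0 by (rule H)
  have "cat_prod_edges E F (u0, w0) (v0, x0)"
    using G.edge H.edge unfolding cat_prod_edges_def by simp
  then show ?thesis
  proof (intro le_chi_vec[OF _ vector_colorable_cat_prod_left[OF G.vector_colorable]] exI)
    fix k assume "vector_colorable (cat_prod_verts V W) (cat_prod_edges E F) k"
    then show "min (chi_vec V E) (chi_vec W F) \<le> k"
      using cat_prod_vector_colorable_ge[OF G H] chi_vec_le[OF G.vector_colorable]
        chi_vec_le[OF H.vector_colorable] by fastforce
  qed
qed

theorem theorem5p5:
  fixes V :: "'a set" and E :: "'a \<Rightarrow> 'a \<Rightarrow> bool"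
    and W :: "'b set" and F :: "'b \<Rightarrow> 'b \<Rightarrow> bool"
  assumes "simple_graph V E" and "simple_graph W F"
    and "one_homogeneous V E" and "one_homogeneous W F"
  shows "chi_vec (cat_prod_verts V W) (cat_prod_edges E F) = min (chi_vec V E) (chi_vec W F)"
proof (cases "(\<exists>u v. E u v) \<and> (\<exists>w x. F w x)")
  case False
  then have "chi_vec (cat_prod_verts V W) (cat_prod_edges E F) = 1"
    "chi_vec V E = 1 \<or> chi_vec W F = 1"
    unfolding chi_vec_def cat_prod_edges_def by auto
  then show ?thesis
    using one_homogeneous_chi_vec_ge_one assms by (metis min.absorb1 min.absorb2)
next
  case True
  then obtain u0 v0 w0 x0 where "E u0 v0" "F w0 x0" by blast
  then have G: "one_homogeneous_graph V E u0 v0" and H: "one_homogeneous_graph W F w0 x0"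
    using assms by unfold_locales
  have "chi_vec (cat_prod_verts V W) (cat_prod_edges E F) \<le> chi_vec V E"
    using chi_vec_cat_prod_le_left[OF _ one_homogeneous_graph.vector_colorable[OF G]] True by blast
  moreover have "chi_vec (cat_prod_verts V W) (cat_prod_edges E F) \<le> chi_vec W F"
    using chi_vec_cat_prod_le_right[OF _ one_homogeneous_graph.vector_colorable[OF H]] True by blast
  ultimately show ?thesis using min_chi_vec_le_cat_prod[OF G H] by linarith
qed

end
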